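(* Let $\alpha>0$ and let $f^+:[0,1]\to[0,1]$ with $f^+(0)=0$. If $ALG(uvw)\le\alpha\,LP(uvw)$ for every $(+,+,+)$-triangle whose edge lengths lie in $[0,1]$ and satisfy the triangle inequalities, then $f^+(x)\le 1-\sqrt{1-\alpha x}$ for every $x\in[0,1]$ with $\alpha x\le 1$.
   Context: A triangle $uvw$ has pairs $uv,vw,uw$, all positive edges in a $(+,+,+)$-triangle, with lengths $x_e\in[0,1]$; triangle inequalities: each length is at most the sum of the other two. Let $p_e=f^+(x_e)$. For a pair $(u,v)$ with third vertex $w$: $e.cost_w(u,v)=p_{uw}(1-p_{vw})+(1-p_{uw})p_{vw}$ and $e.lp_w(u,v)=(1-p_{uw}p_{vw})x_{uv}$. $ALG(uvw)=e.cost_w(u,v)+e.cost_v(w,u)+e.cost_u(v,w)$, $LP(uvw)=e.lp_w(u,v)+e.lp_v(w,u)+e.lp_u(v,w)$. *)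

theory Defs
  imports Complex_Main
begin

text \<open>A (+,+,+)-triangle uvw is described by its three edge lengths
  xuv, xvw, xuw. p_e = f(x_e).\<close>

definition e_cost :: "real \<Rightarrow> real \<Rightarrow> real" where
  "e_cost p_uw p_vw = p_uw * (1 - p_vw) + (1 - p_uw) * p_vw"

definition e_lp :: "real \<Rightarrow> real \<Rightarrow> real \<Rightarrow> real" where
  "e_lp p_uw p_vw x_uv = (1 - p_uw * p_vw) * x_uv"

definition valid_triangle :: "real \<Rightarrow> real \<Rightarrow> real \<Rightarrow> bool" where
  "valid_triangle xuv xvw xuw \<longleftrightarrow>
     xuv \<in> {0..1} \<and> xvw \<in> {0..1} \<and> xuw \<in> {0..1} \<and>
     xuv \<le> xvw + xuw \<and> xvw \<le> xuv + xuw \<and> xuw \<le> xuv + xvw"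

text \<open>ALG(uvw) = e.cost_w(u,v) + e.cost_v(w,u) + e.cost_u(v,w)\<close>
definition ALG :: "(real \<Rightarrow> real) \<Rightarrow> real \<Rightarrow> real \<Rightarrow> real \<Rightarrow> real" where
  "ALG f xuv xvw xuw =
     e_cost (f xuw) (f xvw) + e_cost (f xvw) (f xuv) + e_cost (f xuv) (f xuw)"

text \<open>LP(uvw) = e.lp_w(u,v) + e.lp_v(w,u) + e.lp_u(v,w)\<close>
definition LP :: "(real \<Rightarrow> real) \<Rightarrow> real \<Rightarrow> real \<Rightarrow> real \<Rightarrow> real" where
  "LP f xuv xvw xuw =
     e_lp (f xuw) (f xvw) xuv + e_lp (f xvw) (f xuv) xuw + e_lp (f xuv) (f xuw) xvw"

end

theory Submission
  imports Defs
begin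

(* Degenerate the triangle to edge lengths x, x, 0, i.e. w = u.  With p = f x
   and f 0 = 0 this gives ALG = 4p - 2p^2 and LP = 2x, so the hypothesis says
   (1 - p)^2 >= 1 - alpha x, which is the claim after taking square roots. *)

lemma valid_triangle_degenerate: "x \<in> {0..1} \<Longrightarrow> valid_triangle x x 0"
  by (auto simp: valid_triangle_def)

lemma ALG_degenerate: "f 0 = 0 \<Longrightarrow> ALG f x x 0 = 4 * f x - 2 * (f x)\<^sup>2"
  by (simp add: ALG_def e_cost_def algebra_simps power2_eq_square)

lemma LP_degenerate: "f 0 = 0 \<Longrightarrow> LP f x x 0 = 2 * x"
  by (simp add: LP_def e_lp_def)

lemma le_one_minus_sqrt:
  fixes p a :: real
  assumes "p \<le> 1" and "1 - a \<le> (1 - p)\<^sup>2"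
  shows "p \<le> 1 - sqrt (1 - a)"
proof -
  have "sqrt (1 - a) \<le> sqrt ((1 - p)\<^sup>2)"
    using assms(2) by (rule real_sqrt_le_mono)
  also have "\<dots> = 1 - p"
    using assms(1) by simp
  finally show ?thesis by simp
qed

theorem lemma5:
  fixes f :: "real \<Rightarrow> real" and \<alpha> :: real
  assumes "\<alpha> > 0"
    and "\<forall>x\<in>{0..1}. f x \<in> {0..1}"
    and "f 0 = 0"
    and "\<forall>xuv xvw xuw. valid_triangle xuv xvw xuw \<longrightarrow>
           ALG f xuv xvw xuw \<le> \<alpha> * LP f xuv xvw xuw"
  shows "\<forall>x\<in>{0..1}. \<alpha> * x \<le> 1 \<longrightarrow> f x \<le> 1 - sqrt (1 - \<alpha> * x)"
proof (intro ballI impI)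
  fix x :: real assume x: "x \<in> {0..1}"
  have "ALG f x x 0 \<le> \<alpha> * LP f x x 0"
    using assms(4) valid_triangle_degenerate[OF x] by blast
  then have "4 * f x - 2 * (f x)\<^sup>2 \<le> 2 * \<alpha> * x"
    using assms(3) by (simp add: ALG_degenerate LP_degenerate)
  then have "1 - \<alpha> * x \<le> (1 - f x)\<^sup>2"
    by (simp add: algebra_simps power2_eq_square)
  moreover have "f x \<le> 1"
    using assms(2) x by auto
  ultimately show "f x \<le> 1 - sqrt (1 - \<alpha> * x)"
    by (rule le_one_minus_sqrt[rotated])
qed

end
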